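(* For all $a,b\in\mathbb{C}$ and integers $n\ge0$, $$\sum_{k=0}^n\binom{n}{k}a^kb^{n-k}H_k(3)=H_n(3)(a+b)^n-3\sum_{k=1}^n(a+b)^{n-k}b^k\,\frac{H_{k-1}^2-H_{k-1}^{(2)}-2H_{k-1}H_{n-k}+H_{n-k}^2-H_{n-k}^{(2)}}{k}.$$
   Context: $H_n=\sum_{k=1}^n\frac1k$ (with $H_0=0$) and $H_n^{(2)}=\sum_{k=1}^n\frac1{k^2}$. The multiple harmonic-like number $H_n(3)=\sum_{1\le k_1+k_2+k_3\le n}\frac{1}{k_1k_2k_3}$ (over positive integers $k_1,k_2,k_3$), with $H_0(3)=0$. Convention $0^0=1$. *)

theory Defs
  imports Complex_Main
begin

definition harm1 :: "nat \<Rightarrow> real" where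
  "harm1 n = (\<Sum>k=1..n. 1 / real k)"

definition harm2 :: "nat \<Rightarrow> real" where
  "harm2 n = (\<Sum>k=1..n. 1 / (real k)^2)"

definition harm3 :: "nat \<Rightarrow> real" where
  "harm3 n = (\<Sum>(k1,k2,k3) \<in> {(k1,k2,k3). 1 \<le> k1 \<and> 1 \<le> k2 \<and> 1 \<le> k3 \<and> k1 + k2 + k3 \<le> n}.
                 1 / (real k1 * real k2 * real k3))"

end

theory Submission
  imports Defs
begin

(* With the shift E h(m) = h(m - 1), the left-hand side is ((a + b E)^n h)(n) for h = H(3), and
   a + b E = (a + b) - b (1 - E); so for every sequence h it equals
   sum_k C(n,k) (a+b)^(n-k) (-b)^k (nabla^k h)(n), nabla = 1 - E the backward difference.
   For h = H(3), writing H_n(3) = sum_k (H_{n-k}^2 - H_{n-k}^(2)) / k and using partial fractions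
   gives H_{n+1}(3) - H_n(3) = 3 (H_n^2 - H_n^(2)) / (n+1). With Q(p,q) the numerator in the
   theorem, the recurrence (p+1) Q(p+1,q) + (q+1) Q(p,q+1) = (p+q+2) Q(p,q) then yields
   k C(n,k) (nabla^k H(3))(n) = (-1)^(k-1) 3 Q(k-1, n-k) by induction on k. *)

lemma sum_atMost_Suc_choose:
  fixes f :: "nat \<Rightarrow> 'a::comm_semiring_1"
  shows "(\<Sum>k\<le>Suc n. of_nat (Suc n choose k) * f k)
       = (\<Sum>k\<le>n. of_nat (n choose k) * f k) + (\<Sum>k\<le>n. of_nat (n choose k) * f (Suc k))"
proof -
  have "(\<Sum>k\<le>Suc n. of_nat (Suc n choose k) * f k)
      = f 0 + (\<Sum>k\<le>n. of_nat (n choose Suc k) * f (Suc k)) + (\<Sum>k\<le>n. of_nat (n choose k) * f (Suc k))"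
    by (subst sum.atMost_Suc_shift) (simp add: ring_distribs sum.distrib ac_simps)
  also have "f 0 + (\<Sum>k\<le>n. of_nat (n choose Suc k) * f (Suc k)) = (\<Sum>k\<le>Suc n. of_nat (n choose k) * f k)"
    by (simp only: sum.atMost_Suc_shift) simp
  also have "\<dots> = (\<Sum>k\<le>n. of_nat (n choose k) * f k)"
    by (simp add: binomial_eq_0)
  finally show ?thesis .
qed

definition backward_diff :: "(nat \<Rightarrow> 'a::comm_ring_1) \<Rightarrow> nat \<Rightarrow> nat \<Rightarrow> 'a" where
  "backward_diff h k n = (\<Sum>i\<le>k. (-1) ^ i * of_nat (k choose i) * h (n - i))"

lemma backward_diff_0 [simp]: "backward_diff h 0 n = h n"
  by (simp add: backward_diff_def)

lemma backward_diff_Suc: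
  "backward_diff h (Suc k) n = backward_diff h k n - backward_diff h k (n - 1)"
proof -
  have "backward_diff h (Suc k) n = (\<Sum>i\<le>Suc k. of_nat (Suc k choose i) * ((-1) ^ i * h (n - i)))"
    unfolding backward_diff_def by (intro sum.cong refl) (simp only: mult_ac)
  also have "\<dots> = (\<Sum>i\<le>k. of_nat (k choose i) * ((-1) ^ i * h (n - i)))
                 + (\<Sum>i\<le>k. of_nat (k choose i) * ((-1) ^ Suc i * h (n - Suc i)))"
    by (rule sum_atMost_Suc_choose)
  also have "\<dots> = backward_diff h k n - backward_diff h k (n - 1)"
    unfolding backward_diff_def diff_conv_add_uminus sum_negf[symmetric]
    by (intro arg_cong2[where f = "(+)"] sum.cong refl) (simp_all add: mult_ac)
  finally show ?thesis .
qed

lemma backward_diff_at_Suc: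
  "k \<le> n \<Longrightarrow> backward_diff h k (Suc n) = backward_diff (\<lambda>i. h (Suc i)) k n"
  unfolding backward_diff_def by (intro sum.cong refl) (simp add: Suc_diff_le)

lemma of_real_backward_diff:
  "of_real (backward_diff h k n) = backward_diff (\<lambda>i. of_real (h i) :: 'a::{real_algebra_1,comm_ring_1}) k n"
  by (simp add: backward_diff_def)

lemma binomial_sum_backward_diff:
  fixes a b :: "'a::comm_ring_1"
  shows "(\<Sum>k\<le>n. of_nat (n choose k) * a ^ k * b ^ (n - k) * h k)
       = (\<Sum>k\<le>n. of_nat (n choose k) * (a + b) ^ (n - k) * (-b) ^ k * backward_diff h k n)"
proof (induction n arbitrary: h)
  case 0
  show ?case by simp
next
  case (Suc n)
  let ?L = "\<lambda>h. \<Sum>k\<le>n. of_nat (n choose k) * a ^ k * b ^ (n - k) * h k"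
  let ?R = "\<lambda>h. \<Sum>k\<le>n. of_nat (n choose k) * (a + b) ^ (n - k) * (-b) ^ k * backward_diff h k n"
  have "(\<Sum>k\<le>Suc n. of_nat (Suc n choose k) * a ^ k * b ^ (Suc n - k) * h k)
      = (\<Sum>k\<le>n. of_nat (n choose k) * (a ^ k * (b ^ (Suc n - k) * h k)))
        + (\<Sum>k\<le>n. of_nat (n choose k) * (a ^ Suc k * (b ^ (Suc n - Suc k) * h (Suc k))))"
    by (simp only: mult.assoc sum_atMost_Suc_choose)
  also have "\<dots> = b * ?L h + a * ?L (\<lambda>k. h (Suc k))"
    by (simp add: sum_distrib_left Suc_diff_le mult_ac)
  also have "\<dots> = b * ?R h + a * ?R (\<lambda>k. h (Suc k))"
    by (simp only: Suc.IH)
  also have "\<dots> = (\<Sum>k\<le>n. of_nat (n choose k) * ((a + b) ^ (Suc n - k) * (-b) ^ k * backward_diff h k (Suc n)))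
        + (\<Sum>k\<le>n. of_nat (n choose k) * ((a + b) ^ (Suc n - Suc k) * (-b) ^ Suc k * backward_diff h (Suc k) (Suc n)))"
    by (simp add: sum_distrib_left sum.distrib[symmetric] backward_diff_Suc backward_diff_at_Suc Suc_diff_le algebra_simps)
  also have "\<dots> = (\<Sum>k\<le>Suc n. of_nat (Suc n choose k) * ((a + b) ^ (Suc n - k) * (-b) ^ k * backward_diff h k (Suc n)))"
    by (simp only: sum_atMost_Suc_choose)
  finally show ?case by (simp only: mult.assoc)
qed

lemma harm1_0 [simp]: "harm1 0 = 0"
  by (simp add: harm1_def)

lemma harm1_Suc: "harm1 (Suc n) = harm1 n + 1 / real (Suc n)"
  by (simp add: harm1_def)

lemma harm2_0 [simp]: "harm2 0 = 0"
  by (simp add: harm2_def)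

lemma harm2_Suc: "harm2 (Suc n) = harm2 n + 1 / real (Suc n) ^ 2"
  by (simp add: harm2_def)

lemma harm1_sq_minus_harm2_Suc:
  "harm1 (Suc n) ^ 2 - harm2 (Suc n) = harm1 n ^ 2 - harm2 n + 2 * harm1 n / real (Suc n)"
proof -
  define u where "u = 1 / real (Suc n)"
  have "harm1 (Suc n) = harm1 n + u" "harm2 (Suc n) = harm2 n + u ^ 2"
    by (simp_all add: u_def harm1_Suc harm2_Suc power_one_over)
  then show ?thesis
    by (simp add: power2_eq_square algebra_simps u_def)
qed

lemma sum_harm1_pred_div:
  "(\<Sum>k=1..n. harm1 (k - 1) / real k) = (harm1 n ^ 2 - harm2 n) / 2"
  by (induction n) (simp_all add: harm1_sq_minus_harm2_Suc)

lemma sum_partial_fractions: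
  fixes c :: "nat \<Rightarrow> real"
  shows "(\<Sum>k=1..n. c (n - k) / (real k * real (Suc n - k)))
       = ((\<Sum>k=1..n. c (n - k) / real k) + (\<Sum>k=1..n. c (k - 1) / real k)) / real (Suc n)"
proof -
  have "(\<Sum>k=1..n. c (k - 1) / real k) = (\<Sum>k=1..n. c (n - k) / real (Suc n - k))"
    by (subst sum.atLeastAtMost_rev) (simp add: Suc_diff_le)
  moreover have "c (n - k) / (real k * real (Suc n - k))
      = (c (n - k) / real k + c (n - k) / real (Suc n - k)) / real (Suc n)" if "k \<in> {1..n}" for k
  proof -
    have two_fractions: "d / (x * y) = (d / x + d / y) / (x + y)" if "x > 0" "y > 0" for d x y :: real
    proof -
      have "d / x + d / y = d * (x + y) / (x * y)"
        using that by (simp add: field_simps)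
      then show ?thesis
        using that by simp
    qed
    have "real (Suc n) = real k + real (Suc n - k)"
      using that by (simp add: of_nat_diff)
    then show ?thesis
      using that by (simp only:) (rule two_fractions; simp)
  qed
  ultimately show ?thesis
    by (simp add: sum_divide_distrib add_divide_distrib sum.distrib)
qed

lemma sum_div_Suc_diff:
  fixes f :: "nat \<Rightarrow> real"
  assumes "f 0 = 0"
  shows "(\<Sum>k=1..Suc n. f (Suc n - k) / real k) - (\<Sum>k=1..n. f (n - k) / real k)
       = (\<Sum>k=1..n. (f (Suc n - k) - f (n - k)) / real k)"
  using assms by (simp add: sum_subtractf diff_divide_distrib)

lemma sum_harm1_convolution:
  "(\<Sum>k=1..n. harm1 (n - k) / real k) = harm1 n ^ 2 - harm2 n"
proof (induction n)
  case 0
  show ?case by simp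
next
  case (Suc n)
  have "(\<Sum>k=1..n. (harm1 (Suc n - k) - harm1 (n - k)) / real k)
      = (\<Sum>k=1..n. 1 / (real k * real (Suc n - k)))"
    by (intro sum.cong refl) (simp add: Suc_diff_le harm1_Suc)
  also have "\<dots> = 2 * harm1 n / real (Suc n)"
    using sum_partial_fractions[of "\<lambda>_. 1" n] by (simp add: harm1_def)
  finally show ?case
    using sum_div_Suc_diff[of harm1 n] Suc.IH by (simp add: harm1_sq_minus_harm2_Suc)
qed

lemma harm3_eq_sum:
  "harm3 n = (\<Sum>k=1..n. (harm1 (n - k) ^ 2 - harm2 (n - k)) / real k)"
proof -
  have "{(k1, k2, k3). 1 \<le> k1 \<and> 1 \<le> k2 \<and> 1 \<le> k3 \<and> k1 + k2 + k3 \<le> n}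
      = (SIGMA k1:{1..n}. SIGMA k2:{1..n - k1}. {1..n - k1 - k2})"
    by auto
  then have "harm3 n = (\<Sum>k1=1..n. \<Sum>k2=1..n - k1. \<Sum>k3=1..n - k1 - k2. 1 / (real k1 * real k2 * real k3))"
    unfolding harm3_def by (simp add: sum.Sigma case_prod_beta)
  also have "\<dots> = (\<Sum>k1=1..n. (\<Sum>k2=1..n - k1. harm1 (n - k1 - k2) / real k2) / real k1)"
    by (simp add: harm1_def sum_divide_distrib mult_ac)
  also have "\<dots> = (\<Sum>k=1..n. (harm1 (n - k) ^ 2 - harm2 (n - k)) / real k)"
    by (simp only: diff_diff_left[symmetric] sum_harm1_convolution)
  finally show ?thesis .
qed

lemma harm3_Suc:
  "harm3 (Suc n) = harm3 n + 3 * (harm1 n ^ 2 - harm2 n) / real (Suc n)"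
proof -
  have "harm3 (Suc n) - harm3 n
      = (\<Sum>k=1..n. ((harm1 (Suc n - k) ^ 2 - harm2 (Suc n - k)) - (harm1 (n - k) ^ 2 - harm2 (n - k))) / real k)"
    unfolding harm3_eq_sum by (rule sum_div_Suc_diff) simp
  also have "\<dots> = (\<Sum>k=1..n. 2 * harm1 (n - k) / (real k * real (Suc n - k)))"
    by (intro sum.cong refl) (simp add: Suc_diff_le harm1_sq_minus_harm2_Suc)
  also have "\<dots> = 2 * (\<Sum>k=1..n. harm1 (n - k) / (real k * real (Suc n - k)))"
    by (simp add: sum_distrib_left)
  also have "\<dots> = 2 * ((harm1 n ^ 2 - harm2 n) + (harm1 n ^ 2 - harm2 n) / 2) / real (Suc n)"
    by (simp only: sum_partial_fractions sum_harm1_convolution sum_harm1_pred_div times_divide_eq_right)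
  finally show ?thesis
    by (simp add: field_simps)
qed

definition harm_quad :: "nat \<Rightarrow> nat \<Rightarrow> real" where
  "harm_quad p q = harm1 p ^ 2 - harm2 p - 2 * harm1 p * harm1 q + harm1 q ^ 2 - harm2 q"

lemma harm_quad_Suc_left:
  "harm_quad (Suc p) q = harm_quad p q + 2 * (harm1 p - harm1 q) / real (Suc p)"
  using harm1_sq_minus_harm2_Suc[of p] unfolding harm_quad_def harm1_Suc[of p]
  by (simp add: algebra_simps diff_divide_distrib)

lemma harm_quad_Suc_right:
  "harm_quad p (Suc q) = harm_quad p q + 2 * (harm1 q - harm1 p) / real (Suc q)"
  using harm1_sq_minus_harm2_Suc[of q] unfolding harm_quad_def harm1_Suc[of q]
  by (simp add: algebra_simps diff_divide_distrib)

lemma harm_quad_recurrence: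
  "real (Suc p) * harm_quad (Suc p) q + real (Suc q) * harm_quad p (Suc q)
     = real (p + q + 2) * harm_quad p q"
proof -
  have "real (Suc p) * harm_quad (Suc p) q = real (Suc p) * harm_quad p q + 2 * (harm1 p - harm1 q)"
    by (simp add: harm_quad_Suc_left distrib_left del: of_nat_Suc)
  moreover have "real (Suc q) * harm_quad p (Suc q) = real (Suc q) * harm_quad p q + 2 * (harm1 q - harm1 p)"
    by (simp add: harm_quad_Suc_right distrib_left del: of_nat_Suc)
  ultimately show ?thesis
    by (simp add: algebra_simps)
qed

lemma harm3_backward_diff:
  assumes "Suc p \<le> n"
  shows "real (Suc p) * real (n choose Suc p) * backward_diff harm3 (Suc p) n
       = (-1) ^ p * 3 * harm_quad p (n - Suc p)"
  using assms
proof (induction p arbitrary: n)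
  case 0
  then obtain m where n: "n = Suc m"
    by (cases n) auto
  show ?case
    by (simp add: n backward_diff_Suc harm3_Suc harm_quad_def del: of_nat_Suc)
next
  case (Suc p)
  then obtain q where n: "n = Suc (Suc p + q)"
    by (metis add_Suc le_Suc_ex)
  define m where "m = Suc p + q"
  let ?c = "real (m choose Suc p)"
  let ?D = "backward_diff harm3 (Suc p)"
  have "Suc (Suc p) * (n choose Suc (Suc p)) = n * (m choose Suc p)"
    using binomial_absorption[of "Suc p" n] by (simp add: n m_def del: binomial_Suc_Suc)
  then have binom_high: "real (Suc (Suc p)) * real (n choose Suc (Suc p)) = real n * ?c"
    by (metis of_nat_mult)
  have "Suc q * (n choose Suc p) = n * (m choose Suc p)"
    using binomial_absorb_comp[of n "Suc p"] by (simp add: n m_def del: binomial_Suc_Suc)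
  then have binom_low: "real (Suc q) * real (n choose Suc p) = real n * ?c"
    by (metis of_nat_mult)
  have "real (Suc p) * (real (Suc (Suc p)) * real (n choose Suc (Suc p)) * backward_diff harm3 (Suc (Suc p)) n)
      = real (Suc q) * (real (Suc p) * real (n choose Suc p) * ?D n)
        - real n * (real (Suc p) * ?c * ?D m)"
  proof -
    have "backward_diff harm3 (Suc (Suc p)) n = ?D n - ?D m"
      using backward_diff_Suc[of harm3 "Suc p" n] by (simp add: n m_def)
    then show ?thesis
      using binom_high binom_low by algebra
  qed
  also have "\<dots> = (-1) ^ p * 3 * (real (Suc q) * harm_quad p (Suc q) - real n * harm_quad p q)"
    using Suc.IH[of n] Suc.IH[of m] Suc.prems by (simp add: n m_def algebra_simps del: of_nat_Suc)
  also have "\<dots> = real (Suc p) * ((-1) ^ Suc p * 3 * harm_quad (Suc p) q)"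
  proof -
    have "real (Suc q) * harm_quad p (Suc q) - real n * harm_quad p q = - (real (Suc p) * harm_quad (Suc p) q)"
      using harm_quad_recurrence[of p q] by (simp add: n)
    then show ?thesis
      by simp
  qed
  finally have "real (Suc (Suc p)) * real (n choose Suc (Suc p)) * backward_diff harm3 (Suc (Suc p)) n
      = (-1) ^ Suc p * 3 * harm_quad (Suc p) q"
    by (subst (asm) mult_left_cancel) simp_all
  then show ?case
    by (simp add: n)
qed

lemma harm3_backward_diff_signed:
  assumes "k \<in> {1..n}"
  shows "(-1) ^ k * real (n choose k) * backward_diff harm3 k n
       = - 3 * (harm_quad (k - 1) (n - k) / real k)"
proof -
  define p where "p = k - 1"
  have k: "k = Suc p"
    using assms by (simp add: p_def)
  have "real (n choose k) * backward_diff harm3 k n = (-1) ^ p * 3 * harm_quad (k - 1) (n - k) / real k"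
    using harm3_backward_diff[of p n] assms by (simp add: k field_simps del: of_nat_Suc)
  then show ?thesis
    by (simp add: k mult.assoc minus_one_mult_self)
qed

theorem corollary5:
  fixes a b :: complex and n :: nat
  shows "(\<Sum>k=0..n. of_nat (n choose k) * a ^ k * b ^ (n - k) * complex_of_real (harm3 k)) =
    complex_of_real (harm3 n) * (a + b) ^ n
    - 3 * (\<Sum>k=1..n. (a + b) ^ (n - k) * b ^ k *
        complex_of_real ((harm1 (k - 1) ^ 2 - harm2 (k - 1) - 2 * harm1 (k - 1) * harm1 (n - k)
                          + harm1 (n - k) ^ 2 - harm2 (n - k)) / real k))"
proof -
  let ?h = "\<lambda>k. complex_of_real (harm3 k)"
  let ?t = "\<lambda>k. of_nat (n choose k) * (a + b) ^ (n - k) * (-b) ^ k * backward_diff ?h k n"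
  have summand: "?t k = - 3 * ((a + b) ^ (n - k) * b ^ k * complex_of_real (harm_quad (k - 1) (n - k) / real k))"
    if "k \<in> {1..n}" for k
  proof -
    have "?t k = (a + b) ^ (n - k) * b ^ k * complex_of_real ((-1) ^ k * real (n choose k) * backward_diff harm3 k n)"
      by (simp add: of_real_backward_diff[symmetric] power_minus[of b] mult_ac)
    also have "\<dots> = (a + b) ^ (n - k) * b ^ k * (- 3 * complex_of_real (harm_quad (k - 1) (n - k) / real k))"
      by (simp only: harm3_backward_diff_signed[OF that] of_real_mult of_real_minus of_real_numeral)
    finally show ?thesis
      by (simp only: mult_ac)
  qed
  have "(\<Sum>k=0..n. of_nat (n choose k) * a ^ k * b ^ (n - k) * ?h k) = (\<Sum>k\<le>n. ?t k)"
    unfolding atLeast0AtMost by (rule binomial_sum_backward_diff)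
  also have "\<dots> = ?h n * (a + b) ^ n + (\<Sum>k=1..n. ?t k)"
    by (simp add: atMost_atLeast0 sum.atLeast_Suc_atMost)
  also have "\<dots> = ?h n * (a + b) ^ n
      - 3 * (\<Sum>k=1..n. (a + b) ^ (n - k) * b ^ k * complex_of_real (harm_quad (k - 1) (n - k) / real k))"
    by (simp only: sum.cong[OF refl summand] sum_distrib_left[symmetric]) simp
  finally show ?thesis
    by (simp only: harm_quad_def)
qed

end
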